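(* For every integer $N\ge1$, $D^{\mathcal{PARITY}}({\rm MAJORITY})=D^{\rm XOR}({\rm MAJORITY})=N+1-w(N)$, where ${\rm MAJORITY}$ is on $N$-bit inputs.
   Context: For $X=X_0X_1\cdots X_{N-1}\in\{0,1\}^N$, ${\rm MAJORITY}(X)=0$ if $X$ contains more zeros than ones and ${\rm MAJORITY}(X)=1$ otherwise. $w(N)$ denotes the number of ones in the binary representation of $N$. A $\mathcal{PARITY}$-decision tree on $N$-bit inputs is a deterministic adaptive algorithm that on input $X$ makes a sequence of queries, each being the parity $\bigoplus_{i\in T}X_i$ for some nonempty $T\subseteq\{0,\dots,N-1\}$, each chosen depending on previous answers, and then outputs a value; an XOR decision tree is the same but each query must be either a single bit $X_i$ or $X_i\oplus X_j$ for some $i,j$. The cost is the maximum over inputs of the number of queries. $D^{\mathcal{PARITY}}(f)$ (resp. $D^{\rm XOR}(f)$) is the minimum cost of a $\mathcal{PARITY}$-decision tree (resp. XOR decision tree) that outputs $f(X)$ on every input $X$. *)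

theory Defs
  imports Main
begin

text \<open>Inputs X = X_0 ... X_{N-1} are bool lists of length N (True = 1).\<close>

datatype dtree = Leaf bool | Query "nat set" dtree dtree

definition parity :: "nat set \<Rightarrow> bool list \<Rightarrow> bool" where
  "parity T X = odd (card {i \<in> T. X ! i})"

fun eval_tree :: "dtree \<Rightarrow> bool list \<Rightarrow> bool" where
  "eval_tree (Leaf b) X = b"
| "eval_tree (Query T t0 t1) X = (if parity T X then eval_tree t1 X else eval_tree t0 X)"

fun num_queries :: "dtree \<Rightarrow> bool list \<Rightarrow> nat" where
  "num_queries (Leaf b) X = 0"
| "num_queries (Query T t0 t1) X = Suc (if parity T X then num_queries t1 X else num_queries t0 X)"

fun tree_queries_ok :: "(nat set \<Rightarrow> bool) \<Rightarrow> dtree \<Rightarrow> bool" where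
  "tree_queries_ok Q (Leaf b) = True"
| "tree_queries_ok Q (Query T t0 t1) = (Q T \<and> tree_queries_ok Q t0 \<and> tree_queries_ok Q t1)"

definition parity_query :: "nat \<Rightarrow> nat set \<Rightarrow> bool" where
  "parity_query N T = (T \<noteq> {} \<and> T \<subseteq> {..<N})"

definition xor_query :: "nat \<Rightarrow> nat set \<Rightarrow> bool" where
  "xor_query N T = ((\<exists>i<N. T = {i}) \<or> (\<exists>i<N. \<exists>j<N. i \<noteq> j \<and> T = {i, j}))"

definition tree_cost :: "nat \<Rightarrow> dtree \<Rightarrow> nat" where
  "tree_cost N t = Max ((num_queries t) ` {X. length X = N})"

definition computes :: "nat \<Rightarrow> dtree \<Rightarrow> (bool list \<Rightarrow> bool) \<Rightarrow> bool" where
  "computes N t f = (\<forall>X. length X = N \<longrightarrow> eval_tree t X = f X)"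

definition D :: "(nat \<Rightarrow> nat set \<Rightarrow> bool) \<Rightarrow> nat \<Rightarrow> (bool list \<Rightarrow> bool) \<Rightarrow> nat" where
  "D Q N f = (LEAST c. \<exists>t. tree_queries_ok (Q N) t \<and> computes N t f \<and> tree_cost N t = c)"

definition D_PARITY :: "nat \<Rightarrow> (bool list \<Rightarrow> bool) \<Rightarrow> nat" where
  "D_PARITY = D parity_query"

definition D_XOR :: "nat \<Rightarrow> (bool list \<Rightarrow> bool) \<Rightarrow> nat" where
  "D_XOR = D xor_query"

definition MAJORITY :: "bool list \<Rightarrow> bool" where
  "MAJORITY X = (\<not> (count_list X False > count_list X True))"

fun w :: "nat \<Rightarrow> nat" where
  "w n = (if n = 0 then 0 else n mod 2 + w (n div 2))"

declare w.simps[simp del]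

end

theory Submission
  imports Defs "HOL-Computational_Algebra.Primes" "HOL-Library.Disjoint_Sets"
begin

text \<open>
  Upper bound: pair up the bits and query the XOR of each pair. An equal pair is replaced by one
  bit of twice the weight, an unequal pair cancels. This is binary addition of the votes: a level
  of odd size leaves one bit that outweighs everything below it and is queried only if all higher
  levels cancel.

  Lower bound: the inputs reaching a leaf of a parity decision tree of depth \<open>d\<close> form an affine
  subspace of codimension at most \<open>d\<close>, so every character sum over the inputs rejected by the tree
  is a multiple of \<open>2 ^ (N - d)\<close>. For MAJORITY and the character of all \<open>N\<close> bits this sum is
  \<open>\<plusminus>(N - 1 choose (N - 1) div 2)\<close>, whose 2-adic valuation is \<open>w N - 1\<close> by Legendre's formula.
  XOR decision trees are parity decision trees, so both complexities agree.
\<close>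

section \<open>Decision trees\<close>

lemma finite_lists_length: "finite {X :: bool list. length X = N}"
  using finite_lists_length_eq[of "UNIV :: bool set" N] by simp

lemma num_queries_le_tree_cost: "length X = N \<Longrightarrow> num_queries t X \<le> tree_cost N t"
  unfolding tree_cost_def using finite_lists_length by (intro Max_ge) auto

lemma tree_cost_le: "(\<And>X. length X = N \<Longrightarrow> num_queries t X \<le> c) \<Longrightarrow> tree_cost N t \<le> c"
  unfolding tree_cost_def using finite_lists_length
  by (intro Max.boundedI) (auto intro: exI[where x = "replicate N False"])

lemma tree_queries_ok_mono: "tree_queries_ok Q t \<Longrightarrow> (\<And>T. Q T \<Longrightarrow> Q' T) \<Longrightarrow> tree_queries_ok Q' t"
  by (induction t) auto

lemma xor_query_imp_parity_query: "xor_query N T \<Longrightarrow> parity_query N T"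
  by (auto simp: xor_query_def parity_query_def)

lemma D_eqI:
  assumes "tree_queries_ok (Q N) t" "computes N t f" "tree_cost N t \<le> c"
    and "\<And>t. tree_queries_ok (Q N) t \<Longrightarrow> computes N t f \<Longrightarrow> c \<le> tree_cost N t"
  shows "D Q N f = c"
  unfolding D_def
proof (rule Least_equality)
  show "\<exists>t. tree_queries_ok (Q N) t \<and> computes N t f \<and> tree_cost N t = c"
    using assms(1-3) assms(4)[OF assms(1,2)] le_antisym by blast
qed (use assms(4) in blast)

lemma parity_singleton [simp]: "parity {i} X = X ! i"
  by (simp add: parity_def Collect_conv_if)

lemma parity_doubleton: "i \<noteq> j \<Longrightarrow> parity {i, j} X = (X ! i \<noteq> X ! j)"
proof -
  assume "i \<noteq> j"
  have "{k \<in> {i, j}. X ! k} = (if X ! i then {i} else {}) \<union> (if X ! j then {j} else {})"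
    by auto
  then show ?thesis using \<open>i \<noteq> j\<close> by (simp add: parity_def)
qed

section \<open>Binary digit sums and 2-adic valuations\<close>

lemma w_0 [simp]: "w 0 = 0"
  by (simp add: w.simps)

lemma w_double [simp]: "w (2 * n) = w n"
  by (subst w.simps) simp

lemma w_Suc_double [simp]: "w (Suc (2 * n)) = Suc (w n)"
  by (subst w.simps) simp

lemma multiplicity_two_Suc_double [simp]: "multiplicity 2 (Suc (2 * n)) = 0"
  by (rule not_dvd_imp_multiplicity_0) presburger

lemma w_Suc_add_multiplicity: "w (Suc n) + multiplicity 2 (Suc n) = Suc (w n)"
proof (induction n rule: less_induct)
  case (less n)
  show ?case
  proof (cases "even n")
    case True
    then show ?thesis by (auto elim: evenE)
  next
    case False
    then obtain k where k: "n = Suc (2 * k)" by (auto elim: oddE)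
    have Suc_n: "Suc n = 2 * Suc k" using k by simp
    have "w (Suc k) + multiplicity 2 (Suc k) = Suc (w k)" using less k by simp
    then show ?thesis unfolding Suc_n by (simp add: multiplicity_times_same k del: mult_Suc_right)
  qed
qed

lemma w_Suc_le: "w (Suc n) \<le> Suc (w n)"
  using w_Suc_add_multiplicity[of n] by linarith

lemma w_add_2_le: "w (n + 2) \<le> Suc (w n)"
proof (cases "even n")
  case True
  then obtain k where k: "n = 2 * k" by (auto elim: evenE)
  then have "n + 2 = 2 * Suc k" by simp
  then show ?thesis using w_Suc_le[of k] k by (simp del: mult_Suc_right)
next
  case False
  then obtain k where k: "n = Suc (2 * k)" by (auto elim: oddE)
  then have "n + 2 = Suc (2 * Suc k)" by simp
  then show ?thesis using w_Suc_le[of k] k by (simp del: mult_Suc_right)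
qed

lemma multiplicity_two_mult:
  "(a :: nat) \<noteq> 0 \<Longrightarrow> b \<noteq> 0 \<Longrightarrow> multiplicity 2 (a * b) = multiplicity 2 a + multiplicity 2 b"
  by (rule prime_elem_multiplicity_mult_distrib) auto

lemma multiplicity_two_fact: "multiplicity 2 (fact n :: nat) + w n = n"
proof (induction n)
  case (Suc n)
  have "multiplicity 2 (fact (Suc n) :: nat) = multiplicity 2 (Suc n) + multiplicity 2 (fact n :: nat)"
    by (simp add: multiplicity_two_mult del: mult_Suc)
  then show ?case using Suc w_Suc_add_multiplicity[of n] by linarith
qed simp

lemma multiplicity_two_binomial: "multiplicity 2 ((a + b) choose a) + w (a + b) = w a + w b"
proof -
  have "(fact (a + b) :: nat) = fact a * fact b * ((a + b) choose a)"
    using binomial_fact_lemma[of a "a + b"] by simp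
  then have "multiplicity 2 (fact (a + b) :: nat)
      = multiplicity 2 (fact a :: nat) + multiplicity 2 (fact b :: nat) + multiplicity 2 ((a + b) choose a)"
    by (simp add: multiplicity_two_mult)
  then show ?thesis
    using multiplicity_two_fact[of a] multiplicity_two_fact[of b] multiplicity_two_fact[of "a + b"]
    by linarith
qed

lemma multiplicity_two_central_binomial: "Suc (multiplicity 2 (n choose (n div 2))) = w (Suc n)"
proof (cases "even n")
  case True
  then obtain m where "n = 2 * m" by (auto elim: evenE)
  then show ?thesis using multiplicity_two_binomial[of m m] by (simp flip: mult_2)
next
  case False
  then obtain m where n: "n = Suc (2 * m)" by (auto elim: oddE)
  then have "Suc n = 2 * Suc m" by simp
  then have "w (Suc n) = w (Suc m)" by (simp del: mult_Suc_right)
  moreover have "w n = Suc (w m)" "n = m + Suc m" "n div 2 = m" using n by simp_all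
  ultimately show ?thesis using multiplicity_two_binomial[of m "Suc m"] by simp
qed

section \<open>The pairing algorithm\<close>

text \<open>Positions in \<open>L\<close> carry weight \<open>s\<close>, those in \<open>acc\<close> weight \<open>2 s\<close>, and \<open>lo\<close> is the
  tie-breaker left over from the lower levels.\<close>
function pairing_tree :: "nat list \<Rightarrow> nat list \<Rightarrow> nat option \<Rightarrow> dtree" where
  "pairing_tree (i # j # L) acc lo = Query {i, j} (pairing_tree L (i # acc) lo) (pairing_tree L acc lo)"
| "pairing_tree [i] acc lo = pairing_tree acc [] (Some i)"
| "pairing_tree [] (i # acc) lo = pairing_tree (i # acc) [] lo"
| "pairing_tree [] [] None = Leaf True"
| "pairing_tree [] [] (Some i) = Query {i} (Leaf False) (Leaf True)"
  by pat_completeness auto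
termination
  by (relation "measures [\<lambda>(L, acc, lo). length L + length acc, \<lambda>(L, acc, lo). length acc]") auto

lemma pairing_tree_xor_queries:
  "distinct (L @ acc) \<Longrightarrow> set L \<subseteq> {..<N} \<Longrightarrow> set acc \<subseteq> {..<N} \<Longrightarrow> set_option lo \<subseteq> {..<N}
    \<Longrightarrow> tree_queries_ok (xor_query N) (pairing_tree L acc lo)"
  by (induction L acc lo rule: pairing_tree.induct) (auto simp: xor_query_def)

lemma num_queries_pairing_tree:
  "num_queries (pairing_tree L acc lo) X + w (length L + 2 * length acc) \<le> length L + length acc + 1"
proof (induction L acc lo rule: pairing_tree.induct)
  case (1 i j L acc lo)
  then show ?case using w_add_2_le[of "length L + 2 * length acc"] by (auto simp: algebra_simps)
next
  case (2 i acc lo)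
  then show ?case by (simp add: add.commute)
next
  case (3 i acc lo)
  then show ?case using w_double[of "Suc (length acc)"] by simp
qed simp_all

definition vote :: "bool \<Rightarrow> int" where
  "vote b = (if b then 1 else -1)"

text \<open>\<open>R\<close> is the weighted vote of the lower levels.\<close>
lemma eval_pairing_tree:
  assumes "distinct (L @ acc)" "0 < s" "\<bar>R\<bar> < s"
    and "case lo of None \<Rightarrow> R = 0 | Some i \<Rightarrow> R \<noteq> 0 \<and> (0 \<le> R \<longleftrightarrow> X ! i)"
  shows "eval_tree (pairing_tree L acc lo) X
    \<longleftrightarrow> 0 \<le> s * (\<Sum>i\<leftarrow>L. vote (X ! i)) + 2 * s * (\<Sum>i\<leftarrow>acc. vote (X ! i)) + R"
  using assms
proof (induction L acc lo arbitrary: s R rule: pairing_tree.induct)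
  case (1 i j L acc lo)
  then have "i \<noteq> j" by auto
  then show ?case
    using "1.IH"[of s R] "1.prems" by (auto simp: parity_doubleton vote_def algebra_simps)
next
  case (2 i acc lo)
  have "eval_tree (pairing_tree acc [] (Some i)) X
      \<longleftrightarrow> 0 \<le> 2 * s * (\<Sum>i\<leftarrow>acc. vote (X ! i)) + (s * vote (X ! i) + R)"
    using "2.prems" by (subst "2.IH") (auto simp: vote_def abs_if split: if_splits)
  then show ?case by (simp add: algebra_simps)
next
  case (3 i acc lo)
  have "eval_tree (pairing_tree (i # acc) [] lo) X
      \<longleftrightarrow> 0 \<le> 2 * s * (\<Sum>i\<leftarrow>i # acc. vote (X ! i)) + R"
    using "3.prems" by (subst "3.IH") auto
  then show ?case by (simp add: algebra_simps)
qed auto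

lemma MAJORITY_iff_votes: "MAJORITY X \<longleftrightarrow> 0 \<le> (\<Sum>b\<leftarrow>X. vote b)"
proof -
  have "(\<Sum>b\<leftarrow>X. vote b) = int (count_list X True) - int (count_list X False)"
    by (induction X) (auto simp: vote_def)
  then show ?thesis by (simp add: MAJORITY_def not_less)
qed

definition majority_tree :: "nat \<Rightarrow> dtree" where
  "majority_tree N = pairing_tree [0..<N] [] None"

lemma majority_tree_xor_queries: "tree_queries_ok (xor_query N) (majority_tree N)"
  unfolding majority_tree_def by (rule pairing_tree_xor_queries) auto

lemma majority_tree_computes: "computes N (majority_tree N) MAJORITY"
  unfolding computes_def
proof (intro allI impI)
  fix X :: "bool list"
  assume "length X = N"
  then have "map (\<lambda>i. vote (X ! i)) [0..<N] = map vote X"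
    by (intro nth_equalityI) auto
  moreover have "eval_tree (majority_tree N) X \<longleftrightarrow> 0 \<le> (\<Sum>i\<leftarrow>[0..<N]. vote (X ! i))"
    unfolding majority_tree_def
    using eval_pairing_tree[where L = "[0..<N]" and acc = "[]" and lo = None and s = 1 and R = 0]
    by simp
  ultimately show "eval_tree (majority_tree N) X = MAJORITY X"
    by (simp add: MAJORITY_iff_votes)
qed

lemma num_queries_majority_tree: "num_queries (majority_tree N) X \<le> N + 1 - w N"
  using num_queries_pairing_tree[of "[0..<N]" "[]" None X] by (simp add: majority_tree_def)

section \<open>Character sums over parity regions\<close>

definition chi :: "nat set \<Rightarrow> bool list \<Rightarrow> int" where
  "chi U X = (-1) ^ card {i \<in> U. X ! i}"

lemma chi_parity: "chi T X = (if parity T X then -1 else 1)"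
  by (simp add: chi_def parity_def)

lemma chi_mult:
  assumes "finite U" "finite T"
  shows "chi U X * chi T X = chi (sym_diff U T) X"
proof -
  let ?A = "{i \<in> U. X ! i}" and ?B = "{i \<in> T. X ! i}"
  have fin: "finite ?A" "finite ?B" using assms by auto
  have "card ?A + card ?B = card (?A \<union> ?B) + card (?A \<inter> ?B)"
    using card_Un_Int[OF fin] .
  moreover have "?A \<union> ?B = sym_diff ?A ?B \<union> (?A \<inter> ?B)" by auto
  then have "card (?A \<union> ?B) = card (sym_diff ?A ?B) + card (?A \<inter> ?B)"
    using fin by (simp only:) (intro card_Un_disjoint, auto)
  ultimately have card_sum: "card ?A + card ?B = card (sym_diff ?A ?B) + 2 * card (?A \<inter> ?B)"
    by linarith
  have "chi U X * chi T X = (-1) ^ (card ?A + card ?B)"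
    by (simp add: chi_def power_add)
  also have "\<dots> = (-1) ^ card (sym_diff ?A ?B)"
    unfolding card_sum by (simp add: power_add power_mult)
  also have "sym_diff ?A ?B = {i \<in> sym_diff U T. X ! i}" by auto
  finally show ?thesis by (simp add: chi_def)
qed

lemma chi_flip:
  assumes "i \<in> U" "i < length X" "finite U"
  shows "chi U (X[i := \<not> X ! i]) = - chi U X"
proof -
  let ?A = "{j \<in> U. X ! j}"
  show ?thesis
  proof (cases "X ! i")
    case True
    then have "{j \<in> U. X[i := \<not> X ! i] ! j} = ?A - {i}"
      using assms by (auto simp: nth_list_update)
    moreover have "card ?A = Suc (card (?A - {i}))"
      using True assms by (intro card_Suc_Diff1[symmetric]) auto
    ultimately show ?thesis by (simp add: chi_def)
  next
    case False
    then have "{j \<in> U. X[i := \<not> X ! i] ! j} = insert i ?A"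
      using assms by (auto simp: nth_list_update)
    then show ?thesis using False assms by (simp add: chi_def)
  qed
qed

lemma sum_chi_lists_length:
  assumes "U \<subseteq> {..<N}"
  shows "(\<Sum>X | length X = N. chi U X) = (if U = {} then 2 ^ N else 0)"
proof (cases "U = {}")
  case True
  then show ?thesis
    using card_lists_length_eq[of "UNIV :: bool set" N] by (simp add: chi_def)
next
  case False
  then obtain i where "i \<in> U" by blast
  moreover have "finite U" using assms finite_subset by blast
  ultimately have "(\<Sum>X | length X = N. chi U X) = 0"
  proof (intro sum_involution_eq_0[where h = "\<lambda>X. X[i := \<not> X ! i]"])
    fix X :: "bool list"
    assume "X \<in> {X. length X = N}"
    then have "i < length X" using \<open>i \<in> U\<close> assms by auto
    then show "chi U (X[i := \<not> X ! i]) + chi U X = 0"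
      using \<open>i \<in> U\<close> \<open>finite U\<close> by (simp add: chi_flip)
    show "X[i := \<not> X ! i] \<in> {X. length X = N}"
      using \<open>X \<in> {X. length X = N}\<close> by simp
    show "(X[i := \<not> X ! i])[i := \<not> (X[i := \<not> X ! i]) ! i] = X"
      using \<open>i < length X\<close> by simp
    show "X[i := \<not> X ! i] \<noteq> X"
      using \<open>i < length X\<close> by (metis nth_list_update_eq)
  qed
  then show ?thesis using False by simp
qed

definition parity_region :: "nat \<Rightarrow> (nat set \<times> bool) list \<Rightarrow> bool list set" where
  "parity_region N C = {X. length X = N \<and> (\<forall>(T, b) \<in> set C. parity T X = b)}"

lemma finite_parity_region [simp]: "finite (parity_region N C)"
  by (rule finite_subset[OF _ finite_lists_length[of N]]) (auto simp: parity_region_def)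

lemma parity_region_Cons: "parity_region N ((T, b) # C) = {X \<in> parity_region N C. parity T X = b}"
  by (auto simp: parity_region_def)

lemma sum_chi_filter_parity:
  assumes "finite R" "finite U" "finite T"
  shows "2 * (\<Sum>X \<in> {X \<in> R. parity T X = b}. chi U X)
    = (\<Sum>X \<in> R. chi U X) + (if b then -1 else 1) * (\<Sum>X \<in> R. chi (sym_diff U T) X)"
proof -
  have "2 * (if parity T X = b then chi U X else 0) = chi U X + (if b then -1 else 1) * chi (sym_diff U T) X"
    for X
    using chi_mult[OF assms(2,3), of X, symmetric] by (simp add: chi_parity)
  then show ?thesis
    using assms(1) by (simp add: sum.inter_filter sum_distrib_left sum.distrib)
qed

lemma sum_chi_parity_region_dvd:
  assumes "\<forall>(T, b) \<in> set C. T \<subseteq> {..<N}" "U \<subseteq> {..<N}"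
  shows "2 ^ (N - length C) dvd (\<Sum>X \<in> parity_region N C. chi U X)"
  using assms
proof (induction C arbitrary: U)
  case Nil
  then show ?case by (simp add: parity_region_def sum_chi_lists_length)
next
  case (Cons c C)
  obtain T b where c: "c = (T, b)" by fastforce
  have T: "T \<subseteq> {..<N}" using Cons.prems c by auto
  then have "finite T" "finite U" using Cons.prems finite_subset by blast+
  then have "2 * (\<Sum>X \<in> parity_region N (c # C). chi U X)
      = (\<Sum>X \<in> parity_region N C. chi U X) + (if b then -1 else 1) * (\<Sum>X \<in> parity_region N C. chi (sym_diff U T) X)"
    unfolding c parity_region_Cons by (intro sum_chi_filter_parity) auto
  moreover have "2 ^ (N - length C) dvd (\<Sum>X \<in> parity_region N C. chi V X)" if "V \<subseteq> {..<N}" for V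
    using Cons that by auto
  ultimately have "2 ^ (N - length C) dvd 2 * (\<Sum>X \<in> parity_region N (c # C). chi U X)"
    using Cons.prems T by (simp add: Diff_subset_conv le_supI1 le_supI2)
  moreover have "N - length C = (if N \<le> length C then 0 else Suc (N - length (c # C)))"
    by auto
  ultimately show ?case by (auto split: if_splits)
qed

lemma parity_tree_sum_chi_dvd:
  assumes "tree_queries_ok (parity_query N) t" "\<forall>(T, b) \<in> set C. T \<subseteq> {..<N}" "U \<subseteq> {..<N}"
    and "\<forall>X \<in> parity_region N C. length C + num_queries t X \<le> d"
  shows "2 ^ (N - d) dvd (\<Sum>X \<in> {X \<in> parity_region N C. \<not> eval_tree t X}. chi U X)"
  using assms
proof (induction t arbitrary: C)
  case (Leaf b)
  show ?case
  proof (cases "b \<or> parity_region N C = {}")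
    case False
    then obtain X where "X \<in> parity_region N C" by blast
    then have "length C \<le> d" using Leaf.prems by fastforce
    then have "(2::int) ^ (N - d) dvd 2 ^ (N - length C)" by (simp add: le_imp_power_dvd)
    also have "\<dots> dvd (\<Sum>X \<in> parity_region N C. chi U X)"
      using Leaf.prems by (intro sum_chi_parity_region_dvd) auto
    finally show ?thesis using False by simp
  qed auto
next
  case (Query T t0 t1)
  have T: "T \<subseteq> {..<N}" using Query.prems by (simp add: parity_query_def)
  have branch: "2 ^ (N - d) dvd (\<Sum>X \<in> {X \<in> parity_region N ((T, b) # C). \<not> eval_tree t X}. chi U X)"
    if "t = (if b then t1 else t0)" for b t
  proof -
    have "\<forall>X \<in> parity_region N ((T, b) # C). length ((T, b) # C) + num_queries t X \<le> d"
      using Query.prems(4) that by (auto simp: parity_region_Cons)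
    moreover have "tree_queries_ok (parity_query N) t"
      using Query.prems(1) that by simp
    ultimately show ?thesis
      using that Query.IH Query.prems(2,3) T by (cases b) auto
  qed
  have "{X \<in> parity_region N C. \<not> eval_tree (Query T t0 t1) X}
      = {X \<in> parity_region N ((T, True) # C). \<not> eval_tree t1 X}
        \<union> {X \<in> parity_region N ((T, False) # C). \<not> eval_tree t0 X}"
    by (auto simp: parity_region_Cons)
  then have "(\<Sum>X \<in> {X \<in> parity_region N C. \<not> eval_tree (Query T t0 t1) X}. chi U X)
      = (\<Sum>X \<in> {X \<in> parity_region N ((T, True) # C). \<not> eval_tree t1 X}. chi U X)
        + (\<Sum>X \<in> {X \<in> parity_region N ((T, False) # C). \<not> eval_tree t0 X}. chi U X)"
    by (simp only:) (rule sum.union_disjoint, auto simp: parity_region_Cons)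
  then show ?case using branch[of t1 True] branch[of t0 False] by simp
qed

lemma parity_tree_granularity:
  assumes "tree_queries_ok (parity_query N) t" "U \<subseteq> {..<N}"
  shows "2 ^ (N - tree_cost N t) dvd (\<Sum>X | length X = N \<and> \<not> eval_tree t X. chi U X)"
  using parity_tree_sum_chi_dvd[OF assms(1) _ assms(2), of "[]" "tree_cost N t"]
  by (simp add: parity_region_def num_queries_le_tree_cost)

section \<open>The lower bound for MAJORITY\<close>

lemma sum_lists_length_Suc:
  "(\<Sum>X | length X = Suc n \<and> P X. f X :: 'a :: comm_monoid_add)
    = (\<Sum>X | length X = n \<and> P (False # X). f (False # X)) + (\<Sum>X | length X = n \<and> P (True # X). f (True # X))"
proof -
  let ?S = "\<lambda>b. {X. length X = n \<and> P (b # X)}"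
  have split: "{X. length X = Suc n \<and> P X} = Cons False ` ?S False \<union> Cons True ` ?S True"
  proof (intro equalityI subsetI)
    fix X
    assume "X \<in> {X. length X = Suc n \<and> P X}"
    then obtain b Y where "X = b # Y" "Y \<in> ?S b" by (auto simp: length_Suc_conv)
    then show "X \<in> Cons False ` ?S False \<union> Cons True ` ?S True" by (cases b) auto
  qed auto
  have "finite (?S b)" for b
    using finite_lists_length[of n] by (rule finite_subset[rotated]) auto
  then show ?thesis
    unfolding split by (subst sum.union_disjoint) (auto simp: sum.reindex)
qed

lemma sum_sign_lists_count_le:
  "(\<Sum>X | length X = Suc n \<and> count_list X True \<le> j. (-1) ^ count_list X True) = (-1) ^ j * int (n choose j)"
proof (induction n arbitrary: j)
  case 0
  have "{X. length X = Suc 0 \<and> count_list X True \<le> j} = (if j = 0 then {[False]} else {[False], [True]})"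
    by (auto simp: length_Suc_conv)
  then show ?case by simp
next
  case (Suc n)
  show ?case
  proof (cases j)
    case 0
    then show ?thesis
      unfolding sum_lists_length_Suc[where n = "Suc n"] using Suc.IH[of 0] by simp
  next
    case (Suc i)
    then show ?thesis
      using Suc.IH[of j] Suc.IH[of i] by (simp add: sum_lists_length_Suc[where n = "Suc n"] sum_negf algebra_simps)
  qed
qed

lemma chi_lessThan:
  assumes "length X = N"
  shows "chi {..<N} X = (-1) ^ count_list X True"
proof -
  have "{i \<in> {..<N}. X ! i} = {i. i < length X \<and> True = X ! i}" using assms by auto
  then show ?thesis by (simp add: chi_def count_list_eq_length_filter length_filter_conv_card)
qed

lemma count_list_True_add_False: "count_list X True + count_list X False = length X"
  by (induction X) auto

lemma not_MAJORITY_iff: "length X = Suc n \<Longrightarrow> \<not> MAJORITY X \<longleftrightarrow> count_list X True \<le> n div 2"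
  using count_list_True_add_False[of X] by (auto simp: MAJORITY_def)

lemma MAJORITY_tree_cost_lower_bound:
  assumes "tree_queries_ok (parity_query N) t" "computes N t MAJORITY" "0 < N"
  shows "N + 1 - w N \<le> tree_cost N t"
proof -
  obtain n where N: "N = Suc n" using \<open>0 < N\<close> gr0_implies_Suc by blast
  have "{X. length X = N \<and> \<not> eval_tree t X} = {X. length X = Suc n \<and> count_list X True \<le> n div 2}"
    using assms(2) not_MAJORITY_iff N by (auto simp: computes_def)
  then have "(\<Sum>X | length X = N \<and> \<not> eval_tree t X. chi {..<N} X) = (-1) ^ (n div 2) * int (n choose (n div 2))"
    using sum_sign_lists_count_le[of n "n div 2"] by (simp add: chi_lessThan N)
  then have "2 ^ (N - tree_cost N t) dvd int (n choose (n div 2))"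
    using parity_tree_granularity[OF assms(1), of "{..<N}"] by (simp add: minus_one_power_iff split: if_splits)
  then have "2 ^ (N - tree_cost N t) dvd (n choose (n div 2))"
    by (metis of_nat_dvd_iff of_nat_numeral of_nat_power)
  then have "N - tree_cost N t \<le> multiplicity 2 (n choose (n div 2))"
    by (simp add: power_dvd_iff_le_multiplicity)
  then show ?thesis
    using multiplicity_two_central_binomial[of n] unfolding N by linarith
qed

theorem mainTheorem12:
  fixes N :: nat
  assumes "N \<ge> 1"
  shows "D_PARITY N MAJORITY = N + 1 - w N \<and> D_XOR N MAJORITY = N + 1 - w N"
proof -
  have cost: "tree_cost N (majority_tree N) \<le> N + 1 - w N"
    by (intro tree_cost_le num_queries_majority_tree)
  have lower: "N + 1 - w N \<le> tree_cost N t"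
    if "tree_queries_ok (parity_query N) t" "computes N t MAJORITY" for t
    using MAJORITY_tree_cost_lower_bound[OF that] assms by simp
  have xor_parity: "tree_queries_ok (parity_query N) t" if "tree_queries_ok (xor_query N) t" for t
    using that xor_query_imp_parity_query by (rule tree_queries_ok_mono)
  have "D_PARITY N MAJORITY = N + 1 - w N"
    unfolding D_PARITY_def using cost lower majority_tree_computes majority_tree_xor_queries
    by (intro D_eqI xor_parity) auto
  moreover have "D_XOR N MAJORITY = N + 1 - w N"
    unfolding D_XOR_def using cost lower xor_parity majority_tree_computes majority_tree_xor_queries
    by (intro D_eqI) auto
  ultimately show ?thesis ..
qed

end
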